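(* Let $\otimes$ be a $T$-norm and $\oplus$ a $T$-conorm, and let $\Phi(\oplus)(x,y)=1-((1-x)\oplus(1-y))$. If $\otimes$ and $\Phi(\oplus)$ are both Archimedean copulas, then $(\otimes,\oplus)$ satisfies the rearrangement inequality and the dual rearrangement inequality.
   Context: A uninorm is a function $\otimes:[0,1]^2\to[0,1]$ that is commutative, associative, monotonic ($x\leq y$ implies $x\otimes z\leq y\otimes z$), and has an identity element; a $T$-norm is a uninorm with identity $1$, a $T$-conorm one with identity $0$. A $T$-norm $\otimes$ is Archimedean if for all $0<x,y<1$ there exists $n$ with $x\otimes\cdots\otimes x$ ($n$ times) $\leq y$. A copula is a function $c:[0,1]^2\to[0,1]$ that satisfies neutrality of $1$, is monotonic, and satisfies: for all $0\leq x\leq y\leq1$, $0\leq z\leq w\leq1$, $c(x,w)-c(x,z)\leq c(y,w)-c(y,z)$. $(\otimes,\oplus)$ satisfies the rearrangement inequality if for every $n\geq1$, all $0\leq x_1\leq\cdots\leq x_n\leq 1$, $0\leq y_1\leq\cdots\leq y_n\leq 1$ and every permutation $\sigma$ of $\{1,\dots,n\}$, $$(x_n\otimes y_1)\oplus\cdots\oplus(x_1\otimes y_n)\leq (x_{\sigma(1)}\otimes y_1)\oplus\cdots\oplus(x_{\sigma(n)}\otimes y_n)\leq (x_1\otimes y_1)\oplus\cdots\oplus(x_n\otimes y_n),$$ and the dual rearrangement inequality if for all such data $$(x_n\oplus y_1)\otimes\cdots\otimes(x_1\oplus y_n)\geq (x_{\sigma(1)}\oplus y_1)\otimes\cdots\otimes(x_{\sigma(n)}\oplus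 y_n)\geq (x_1\oplus y_1)\otimes\cdots\otimes(x_n\oplus y_n).$$ *)

theory Defs
  imports "HOL-Analysis.Analysis" "HOL-Combinatorics.Permutations"
begin

type_synonym binop = "real \<Rightarrow> real \<Rightarrow> real"

definition unit_int :: "real set" where "unit_int = {0..1}"

definition uninorm :: "binop \<Rightarrow> bool" where
  "uninorm f \<longleftrightarrow>
     (\<forall>x\<in>unit_int. \<forall>y\<in>unit_int. f x y \<in> unit_int) \<and>
     (\<forall>x\<in>unit_int. \<forall>y\<in>unit_int. f x y = f y x) \<and>
     (\<forall>x\<in>unit_int. \<forall>y\<in>unit_int. \<forall>z\<in>unit_int. f (f x y) z = f x (f y z)) \<and>
     (\<forall>x\<in>unit_int. \<forall>y\<in>unit_int. \<forall>z\<in>unit_int. x \<le> y \<longrightarrow> f x z \<le> f y z) \<and>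
     (\<exists>e\<in>unit_int. \<forall>x\<in>unit_int. f e x = x \<and> f x e = x)"

definition tnorm :: "binop \<Rightarrow> bool" where
  "tnorm f \<longleftrightarrow> uninorm f \<and> (\<forall>x\<in>unit_int. f 1 x = x \<and> f x 1 = x)"

definition tconorm :: "binop \<Rightarrow> bool" where
  "tconorm f \<longleftrightarrow> uninorm f \<and> (\<forall>x\<in>unit_int. f 0 x = x \<and> f x 0 = x)"

fun npow :: "binop \<Rightarrow> nat \<Rightarrow> real \<Rightarrow> real" where
  "npow f 0 x = x"
| "npow f (Suc n) x = f (npow f n x) x"
(* npow f k x is the (k+1)-fold power *)

definition archimedean :: "binop \<Rightarrow> bool" where
  "archimedean f \<longleftrightarrow>
     (\<forall>x y. 0 < x \<and> x < 1 \<and> 0 < y \<and> y < 1 \<longrightarrow> (\<exists>n. npow f n x \<le> y))"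

definition copula :: "binop \<Rightarrow> bool" where
  "copula c \<longleftrightarrow>
     (\<forall>x\<in>unit_int. c 1 x = x \<and> c x 1 = x) \<and>
     (\<forall>x\<in>unit_int. \<forall>y\<in>unit_int. \<forall>z\<in>unit_int. x \<le> y \<longrightarrow> c x z \<le> c y z \<and> c z x \<le> c z y) \<and>
     (\<forall>x y z w. 0 \<le> x \<and> x \<le> y \<and> y \<le> 1 \<and> 0 \<le> z \<and> z \<le> w \<and> w \<le> 1 \<longrightarrow>
        c x w - c x z \<le> c y w - c y z)"

definition Phi :: "binop \<Rightarrow> binop" where
  "Phi g = (\<lambda>x y. 1 - g (1 - x) (1 - y))"

definition bigop :: "binop \<Rightarrow> (nat \<Rightarrow> real) \<Rightarrow> nat \<Rightarrow> real" where
  "bigop f a n = foldl f (a 0) (map a [1..<n])"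

definition sorted_unit :: "(nat \<Rightarrow> real) \<Rightarrow> nat \<Rightarrow> bool" where
  "sorted_unit x n \<longleftrightarrow> (\<forall>i<n. 0 \<le> x i \<and> x i \<le> 1) \<and> (\<forall>i j. i \<le> j \<and> j < n \<longrightarrow> x i \<le> x j)"

definition rearrangement_ineq :: "binop \<Rightarrow> binop \<Rightarrow> bool" where
  "rearrangement_ineq t s \<longleftrightarrow>
    (\<forall>n x y \<sigma>. n \<ge> 1 \<and> sorted_unit x n \<and> sorted_unit y n \<and> \<sigma> permutes {..<n} \<longrightarrow>
       bigop s (\<lambda>i. t (x (n - 1 - i)) (y i)) n \<le> bigop s (\<lambda>i. t (x (\<sigma> i)) (y i)) n \<and>
       bigop s (\<lambda>i. t (x (\<sigma> i)) (y i)) n \<le> bigop s (\<lambda>i. t (x i) (y i)) n)"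

definition dual_rearrangement_ineq :: "binop \<Rightarrow> binop \<Rightarrow> bool" where
  "dual_rearrangement_ineq t s \<longleftrightarrow>
    (\<forall>n x y \<sigma>. n \<ge> 1 \<and> sorted_unit x n \<and> sorted_unit y n \<and> \<sigma> permutes {..<n} \<longrightarrow>
       bigop t (\<lambda>i. s (x (n - 1 - i)) (y i)) n \<ge> bigop t (\<lambda>i. s (x (\<sigma> i)) (y i)) n \<and>
       bigop t (\<lambda>i. s (x (\<sigma> i)) (y i)) n \<ge> bigop t (\<lambda>i. s (x i) (y i)) n)"

end

theory Submission
  imports Defs
begin

(* Both inequalities reduce to their two-term cases by an exchange argument: a single
   transposition puts the largest index of a permutation in place and changes only two terms.
   If a T-norm C is a copula, then C u v <= C (u + e) (v - e) whenever 0 <= u, 0 <= e and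
   u + e <= v <= 1: C v is 1-Lipschitz, so some w has C w v = v - e, and 2-increasingness gives
   C (u + e) w >= u, whence C (u + e) (v - e) = C (C (u + e) w) v >= C u v.  Consequently
   C a d <= C b c whenever a <= b, c <= d and a + d <= b + c.  The two-term cases are instances
   of this for C = t and for C = Phi s, the inequality a + d <= b + c coming from
   2-increasingness of the other operation. *)

lemma permutes_reverse: "(\<lambda>i. if i < n then n - 1 - i else i) permutes {..<n::nat}"
proof (rule bij_imp_permutes)
  show "bij_betw (\<lambda>i. if i < n then n - 1 - i else i) {..<n} {..<n}"
    by (rule bij_betw_byWitness[where f' = "\<lambda>i. n - 1 - i"]) auto
qed simp

definition fold_op :: "('a \<Rightarrow> 'a \<Rightarrow> 'a) \<Rightarrow> 'a \<Rightarrow> ('b \<Rightarrow> 'a) \<Rightarrow> 'b set \<Rightarrow> 'a" where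
  "fold_op f z g A = Finite_Set.fold (\<lambda>i. f (g i)) z A"

context abel_semigroup
begin

lemma fold_op_empty [simp]: "fold_op f z g {} = z"
  by (simp add: fold_op_def)

lemma fold_op_insert [simp]:
  assumes "finite A" "i \<notin> A"
  shows "fold_op f z g (insert i A) = f (g i) (fold_op f z g A)"
proof -
  interpret comp_fun_commute "\<lambda>i. f (g i)"
    by unfold_locales (auto simp: fun_eq_iff left_commute)
  show ?thesis
    using assms by (simp add: fold_op_def)
qed

lemma fold_op_cong:
  assumes "finite A" "\<And>i. i \<in> A \<Longrightarrow> g i = g' i"
  shows "fold_op f z g A = fold_op f z g' A"
  using assms by (induction A rule: finite_induct) auto

lemma fold_op_exchange:
  assumes mono: "\<And>a b c. R a b \<Longrightarrow> R (f a c) (f b c)"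
    and "finite A" "i \<in> A" "j \<in> A" "i \<noteq> j"
    and agree: "\<And>k. k \<in> A - {i, j} \<Longrightarrow> g k = g' k"
    and pair: "R (f (g i) (g j)) (f (g' i) (g' j))"
  shows "R (fold_op f z g A) (fold_op f z g' A)"
proof -
  define B where "B = A - {i, j}"
  have A: "A = insert i (insert j B)" and B: "finite B" "i \<notin> insert j B" "j \<notin> B"
    using assms(2-5) by (auto simp: B_def)
  have "fold_op f z g' B = fold_op f z g B"
    using B(1) agree by (intro fold_op_cong) (auto simp: B_def)
  then show ?thesis
    using mono[OF pair, of "fold_op f z g B"] B by (simp add: A assoc)
qed

lemma fold_op_transpose_top:
  fixes h :: "nat \<Rightarrow> nat \<Rightarrow> 'a"
  assumes "reflp R" and mono: "\<And>a b c. R a b \<Longrightarrow> R (f a c) (f b c)"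
    and exchange: "\<And>i i' j j'. i \<le> i' \<Longrightarrow> j \<le> j' \<Longrightarrow> i' < n \<Longrightarrow> j' < n \<Longrightarrow>
          R (f (h i' j) (h i j')) (f (h i j) (h i' j'))"
    and \<tau>: "\<tau> permutes {..<Suc m}" and "Suc m \<le> n"
  shows "R (fold_op f z (\<lambda>i. h (\<tau> i) i) {..<Suc m})
    (fold_op f z (\<lambda>i. h ((\<tau> \<circ> Transposition.transpose (inv \<tau> m) m) i) i) {..<Suc m})"
proof (cases "inv \<tau> m = m")
  case True
  then show ?thesis
    using \<open>reflp R\<close> by (simp add: reflpD)
next
  case False
  have "\<tau> (inv \<tau> m) = m" "inv \<tau> m < Suc m" "\<tau> m < Suc m"
    using \<tau> permutes_in_image permutes_inverses(1) permutes_inv by fastforce+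
  with False \<open>Suc m \<le> n\<close> show ?thesis
    by (intro fold_op_exchange[where R = R and i = "inv \<tau> m" and j = m] mono)
      (auto intro: exchange)
qed

lemma fold_op_rearrangement:
  fixes h :: "nat \<Rightarrow> nat \<Rightarrow> 'a"
  assumes "reflp R" "transp R" and mono: "\<And>a b c. R a b \<Longrightarrow> R (f a c) (f b c)"
    and exchange: "\<And>i i' j j'. i \<le> i' \<Longrightarrow> j \<le> j' \<Longrightarrow> i' < n \<Longrightarrow> j' < n \<Longrightarrow>
          R (f (h i' j) (h i j')) (f (h i j) (h i' j'))"
    and "\<sigma> permutes {..<n}"
  shows "R (fold_op f z (\<lambda>i. h (\<sigma> i) i) {..<n}) (fold_op f z (\<lambda>i. h i i) {..<n})"
proof -
  have "R (fold_op f z (\<lambda>i. h (\<tau> i) i) {..<m}) (fold_op f z (\<lambda>i. h i i) {..<m})"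
    if "m \<le> n" "\<tau> permutes {..<m}" for m \<tau>
    using that
  proof (induction m arbitrary: \<tau>)
    case 0
    then show ?case
      using \<open>reflp R\<close> by (simp add: reflpD)
  next
    case (Suc m)
    define \<tau>' where "\<tau>' = \<tau> \<circ> Transposition.transpose (inv \<tau> m) m"
    have "inv \<tau> m < Suc m"
      using Suc.prems(2) permutes_in_image permutes_inv by fastforce
    then have "\<tau>' permutes {..<Suc m}"
      unfolding \<tau>'_def using Suc.prems(2) by (intro permutes_compose permutes_swap_id) auto
    moreover have top: "\<tau>' m = m"
      using Suc.prems(2) by (simp add: \<tau>'_def permutes_inverses(1))
    ultimately have "\<tau>' permutes {..<m}"
      using permutes_superset[of \<tau>' "{..<Suc m}" "{..<m}"] by (auto simp: lessThan_Suc)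
    with Suc have "R (fold_op f z (\<lambda>i. h (\<tau>' i) i) {..<m}) (fold_op f z (\<lambda>i. h i i) {..<m})"
      by simp
    then have "R (f (h m m) (fold_op f z (\<lambda>i. h (\<tau>' i) i) {..<m}))
        (f (h m m) (fold_op f z (\<lambda>i. h i i) {..<m}))"
      using mono commute by metis
    then have "R (fold_op f z (\<lambda>i. h (\<tau>' i) i) {..<Suc m}) (fold_op f z (\<lambda>i. h i i) {..<Suc m})"
      using top by (simp add: lessThan_Suc)
    moreover have "R (fold_op f z (\<lambda>i. h (\<tau> i) i) {..<Suc m}) (fold_op f z (\<lambda>i. h (\<tau>' i) i) {..<Suc m})"
      using fold_op_transpose_top[OF assms(1) mono exchange Suc.prems(2,1)] by (simp add: \<tau>'_def)
    ultimately show ?case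
      using \<open>transp R\<close> by (meson transpD)
  qed
  then show ?thesis
    using assms(5) by blast
qed

lemma fold_op_rearrangement_reverse:
  fixes h :: "nat \<Rightarrow> nat \<Rightarrow> 'a"
  assumes "reflp R" "transp R" and mono: "\<And>a b c. R a b \<Longrightarrow> R (f a c) (f b c)"
    and exchange: "\<And>i i' j j'. i \<le> i' \<Longrightarrow> j \<le> j' \<Longrightarrow> i' < n \<Longrightarrow> j' < n \<Longrightarrow>
          R (f (h i' j) (h i j')) (f (h i j) (h i' j'))"
    and \<sigma>: "\<sigma> permutes {..<n}"
  shows "R (fold_op f z (\<lambda>i. h (n - 1 - i) i) {..<n}) (fold_op f z (\<lambda>i. h (\<sigma> i) i) {..<n})"
proof -
  define \<rho> where "\<rho> i = (if i < n then n - 1 - i else i)" for i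
  have "n - 1 - \<rho> (\<sigma> i) = \<sigma> i" if "i \<in> {..<n}" for i
  proof -
    have "\<sigma> i < n"
      using permutes_in_image[OF \<sigma>] that by simp
    then show ?thesis
      by (simp add: \<rho>_def)
  qed
  then have "fold_op f z (\<lambda>i. h (n - 1 - (\<rho> \<circ> \<sigma>) i) i) {..<n} = fold_op f z (\<lambda>i. h (\<sigma> i) i) {..<n}"
    by (intro fold_op_cong) simp_all
  moreover have "R (fold_op f z (\<lambda>i. h (n - 1 - i) i) {..<n})
      (fold_op f z (\<lambda>i. h (n - 1 - (\<rho> \<circ> \<sigma>) i) i) {..<n})"
  proof (rule fold_op_rearrangement[where R = "\<lambda>a b. R b a" and h = "\<lambda>i j. h (n - 1 - i) j" and \<sigma> = "\<rho> \<circ> \<sigma>"])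
    show "reflp (\<lambda>a b. R b a)" "transp (\<lambda>a b. R b a)"
      using assms(1,2) by (auto simp: reflp_def transp_def)
    show "R (f b c) (f a c)" if "R b a" for a b c
      using mono that .
    show "R (f (h (n - 1 - i) j) (h (n - 1 - i') j')) (f (h (n - 1 - i') j) (h (n - 1 - i) j'))"
      if "i \<le> i'" "j \<le> j'" "i' < n" "j' < n" for i i' j j'
      using that by (intro exchange) auto
    show "\<rho> \<circ> \<sigma> permutes {..<n}"
      using \<sigma> permutes_reverse unfolding \<rho>_def[abs_def] by (rule permutes_compose)
  qed
  ultimately show ?thesis
    by simp
qed

end

lemma uninorm_closed: "uninorm f \<Longrightarrow> x \<in> unit_int \<Longrightarrow> y \<in> unit_int \<Longrightarrow> f x y \<in> unit_int"
  and uninorm_commute: "uninorm f \<Longrightarrow> x \<in> unit_int \<Longrightarrow> y \<in> unit_int \<Longrightarrow> f x y = f y x"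
  and uninorm_assoc: "uninorm f \<Longrightarrow> x \<in> unit_int \<Longrightarrow> y \<in> unit_int \<Longrightarrow> z \<in> unit_int \<Longrightarrow>
      f (f x y) z = f x (f y z)"
  and uninorm_mono_left: "uninorm f \<Longrightarrow> x \<in> unit_int \<Longrightarrow> y \<in> unit_int \<Longrightarrow> z \<in> unit_int \<Longrightarrow>
      x \<le> y \<Longrightarrow> f x z \<le> f y z"
  unfolding uninorm_def by blast+

lemma uninorm_mono:
  assumes "uninorm f" "x \<in> unit_int" "x' \<in> unit_int" "y \<in> unit_int" "y' \<in> unit_int" "x \<le> x'" "y \<le> y'"
  shows "f x y \<le> f x' y'"
proof -
  have "f x y \<le> f x' y"
    using assms by (auto intro: uninorm_mono_left)
  also have "\<dots> = f y x'"
    using assms by (auto intro: uninorm_commute)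
  also have "\<dots> \<le> f y' x'"
    using assms by (auto intro: uninorm_mono_left)
  also have "\<dots> = f x' y'"
    using assms by (auto intro: uninorm_commute)
  finally show ?thesis .
qed

(* Clamping the arguments extends a uninorm on [0, 1] to a commutative semigroup on all of
   the reals, to which Finite_Set.fold applies. *)
definition clamp_unit :: "real \<Rightarrow> real" where
  "clamp_unit x = max 0 (min 1 x)"

definition clamped :: "binop \<Rightarrow> binop" where
  "clamped f x y = f (clamp_unit x) (clamp_unit y)"

lemma clamp_unit_in_unit_int: "clamp_unit x \<in> unit_int"
  by (auto simp: clamp_unit_def unit_int_def)

lemma clamp_unit_id: "x \<in> unit_int \<Longrightarrow> clamp_unit x = x"
  by (auto simp: clamp_unit_def unit_int_def)

lemma clamped_eq [simp]: "x \<in> unit_int \<Longrightarrow> y \<in> unit_int \<Longrightarrow> clamped f x y = f x y"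
  by (simp add: clamped_def clamp_unit_id)

lemma clamped_mono: "uninorm f \<Longrightarrow> a \<le> b \<Longrightarrow> clamped f a c \<le> clamped f b c"
  unfolding clamped_def
  by (rule uninorm_mono_left) (auto simp: clamp_unit_in_unit_int, auto simp: clamp_unit_def)

lemma abel_semigroup_clamped: "uninorm f \<Longrightarrow> abel_semigroup (clamped f)"
proof
  assume f: "uninorm f"
  show "clamped f (clamped f a b) c = clamped f a (clamped f b c)" for a b c
    using f by (simp add: clamped_def clamp_unit_id clamp_unit_in_unit_int uninorm_closed uninorm_assoc)
  show "clamped f a b = clamped f b a" for a b
    using f by (simp add: clamped_def clamp_unit_in_unit_int uninorm_commute)
qed

lemma fold_op_clamped_in_unit_int:
  assumes f: "uninorm f" and "z \<in> unit_int" "finite A"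
  shows "fold_op (clamped f) z g A \<in> unit_int"
proof -
  interpret abel_semigroup "clamped f"
    using f by (rule abel_semigroup_clamped)
  show ?thesis
    using \<open>finite A\<close> \<open>z \<in> unit_int\<close> f
    by (induction A rule: finite_induct) (simp_all add: clamped_def clamp_unit_in_unit_int uninorm_closed)
qed

lemma bigop_eq_fold_op:
  assumes f: "uninorm f" and e: "e \<in> unit_int" "\<And>x. x \<in> unit_int \<Longrightarrow> f x e = x"
    and a: "\<And>i. i < n \<Longrightarrow> a i \<in> unit_int" and "n \<ge> 1"
  shows "bigop f a n = fold_op (clamped f) e a {..<n}"
proof -
  interpret abel_semigroup "clamped f"
    using f by (rule abel_semigroup_clamped)
  show ?thesis
    using \<open>n \<ge> 1\<close> a
  proof (induction n rule: nat_induct_at_least)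
    case base
    then show ?case
      using e by (simp add: bigop_def lessThan_Suc)
  next
    case (Suc n)
    then have IH: "bigop f a n = fold_op (clamped f) e a {..<n}"
      by simp
    have "bigop f a n \<in> unit_int"
      unfolding IH using f e(1) by (rule fold_op_clamped_in_unit_int) simp
    have "bigop f a (Suc n) = f (bigop f a n) (a n)"
      using \<open>n \<ge> 1\<close> by (simp add: bigop_def)
    also have "\<dots> = clamped f (a n) (fold_op (clamped f) e a {..<n})"
      using Suc.prems f \<open>bigop f a n \<in> unit_int\<close> by (simp add: IH uninorm_commute)
    finally show ?case
      by (simp add: lessThan_Suc)
  qed
qed

lemma bigop_rearrangement:
  fixes f g :: binop and R :: "real \<Rightarrow> real \<Rightarrow> bool"
  assumes f: "uninorm f" and e: "e \<in> unit_int" "\<And>x. x \<in> unit_int \<Longrightarrow> f x e = x"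
    and g: "\<And>x y. x \<in> unit_int \<Longrightarrow> y \<in> unit_int \<Longrightarrow> g x y \<in> unit_int"
    and R: "R = (\<le>) \<or> R = (\<ge>)"
    and exchange: "\<And>x1 x2 y1 y2. x1 \<in> unit_int \<Longrightarrow> x2 \<in> unit_int \<Longrightarrow> y1 \<in> unit_int \<Longrightarrow> y2 \<in> unit_int \<Longrightarrow>
        x1 \<le> x2 \<Longrightarrow> y1 \<le> y2 \<Longrightarrow> R (f (g x2 y1) (g x1 y2)) (f (g x1 y1) (g x2 y2))"
    and "n \<ge> 1" and x: "sorted_unit x n" and y: "sorted_unit y n" and \<sigma>: "\<sigma> permutes {..<n}"
  shows "R (bigop f (\<lambda>i. g (x (n - 1 - i)) (y i)) n) (bigop f (\<lambda>i. g (x (\<sigma> i)) (y i)) n) \<and>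
    R (bigop f (\<lambda>i. g (x (\<sigma> i)) (y i)) n) (bigop f (\<lambda>i. g (x i) (y i)) n)"
proof -
  interpret abel_semigroup "clamped f"
    using f by (rule abel_semigroup_clamped)
  define h where "h i j = g (x i) (y j)" for i j
  have x_unit: "x i \<in> unit_int" and y_unit: "y i \<in> unit_int" if "i < n" for i
    using that x y by (auto simp: sorted_unit_def unit_int_def)
  have preorder: "reflp R" "transp R"
    using R by (auto simp: reflp_def transp_def)
  have mono: "R (clamped f a c) (clamped f b c)" if "R a b" for a b c
    using R that clamped_mono[OF f] by auto
  have h_exchange: "R (clamped f (h i' j) (h i j')) (clamped f (h i j) (h i' j'))"
    if "i \<le> i'" "j \<le> j'" "i' < n" "j' < n" for i i' j j'
    using that x y x_unit y_unit g unfolding h_def sorted_unit_def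
    by (simp add: exchange)
  have fold_bounds:
    "R (fold_op (clamped f) e (\<lambda>i. h (n - 1 - i) i) {..<n}) (fold_op (clamped f) e (\<lambda>i. h (\<sigma> i) i) {..<n})"
    "R (fold_op (clamped f) e (\<lambda>i. h (\<sigma> i) i) {..<n}) (fold_op (clamped f) e (\<lambda>i. h i i) {..<n})"
    using fold_op_rearrangement_reverse[OF preorder mono h_exchange \<sigma>]
      fold_op_rearrangement[OF preorder mono h_exchange \<sigma>] by simp_all
  have bigop_fold: "bigop f (\<lambda>i. h (\<tau> i) i) n = fold_op (clamped f) e (\<lambda>i. h (\<tau> i) i) {..<n}"
    if "\<And>i. i < n \<Longrightarrow> \<tau> i < n" for \<tau>
    using f e \<open>n \<ge> 1\<close> that x_unit y_unit g unfolding h_def by (intro bigop_eq_fold_op) auto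
  have "bigop f (\<lambda>i. h (n - 1 - i) i) n = fold_op (clamped f) e (\<lambda>i. h (n - 1 - i) i) {..<n}"
    "bigop f (\<lambda>i. h (\<sigma> i) i) n = fold_op (clamped f) e (\<lambda>i. h (\<sigma> i) i) {..<n}"
    "bigop f (\<lambda>i. h i i) n = fold_op (clamped f) e (\<lambda>i. h i i) {..<n}"
    using bigop_fold[of "\<lambda>i. n - 1 - i"] bigop_fold[of \<sigma>] bigop_fold[of id] permutes_in_image[OF \<sigma>]
    by auto
  with fold_bounds show ?thesis
    unfolding h_def by simp
qed

lemma tnorm_uninorm: "tnorm f \<Longrightarrow> uninorm f"
  and tconorm_uninorm: "tconorm f \<Longrightarrow> uninorm f"
  by (simp_all add: tnorm_def tconorm_def)

lemma tnorm_zero: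
  assumes "tnorm C" "x \<in> unit_int"
  shows "C x 0 = 0"
proof -
  have "0 \<in> unit_int" "1 \<in> unit_int" "x \<le> 1"
    using assms(2) by (auto simp: unit_int_def)
  then have "C x 0 \<le> C 1 0" "C x 0 \<in> unit_int"
    using assms uninorm_mono_left[OF tnorm_uninorm] uninorm_closed[OF tnorm_uninorm] by blast+
  moreover have "C 1 0 = 0"
    using assms(1) \<open>0 \<in> unit_int\<close> by (simp add: tnorm_def)
  ultimately show ?thesis
    by (simp add: unit_int_def)
qed

lemma copula_one: "copula C \<Longrightarrow> x \<in> unit_int \<Longrightarrow> C 1 x = x \<and> C x 1 = x"
  and copula_mono: "copula C \<Longrightarrow> x \<in> unit_int \<Longrightarrow> y \<in> unit_int \<Longrightarrow> z \<in> unit_int \<Longrightarrow> x \<le> y \<Longrightarrow>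
      C x z \<le> C y z \<and> C z x \<le> C z y"
  and copula_2_increasing: "copula C \<Longrightarrow> 0 \<le> x \<Longrightarrow> x \<le> y \<Longrightarrow> y \<le> 1 \<Longrightarrow> 0 \<le> z \<Longrightarrow> z \<le> w \<Longrightarrow> w \<le> 1 \<Longrightarrow>
      C x w - C x z \<le> C y w - C y z"
  unfolding copula_def by blast+

lemma copula_lipschitz:
  assumes "copula C" "v \<in> unit_int"
  shows "1-lipschitz_on unit_int (C v)"
proof -
  have increment: "0 \<le> C v w - C v z \<and> C v w - C v z \<le> w - z"
    if "z \<in> unit_int" "w \<in> unit_int" "z \<le> w" for z w
  proof -
    have "C v w - C v z \<le> C 1 w - C 1 z"
      using assms that by (intro copula_2_increasing) (auto simp: unit_int_def)
    then show ?thesis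
      using assms that copula_one[of C] copula_mono[of C z w v] by auto
  qed
  have "\<bar>C v a - C v b\<bar> \<le> \<bar>a - b\<bar>" if "a \<in> unit_int" "b \<in> unit_int" for a b
    using increment[of a b] increment[of b a] that by (cases "a \<le> b") auto
  then show ?thesis
    by (simp add: lipschitz_on_def dist_real_def)
qed

lemma tnorm_copula_transfer:
  assumes C: "tnorm C" "copula C" and "0 \<le> u" "0 \<le> e" "u + e \<le> v" "v \<le> 1"
  shows "C u v \<le> C (u + e) (v - e)"
proof -
  have unit: "u \<in> unit_int" "u + e \<in> unit_int" "v \<in> unit_int"
    using assms by (auto simp: unit_int_def)
  have "continuous_on {0..1} (C v)"
    using lipschitz_on_continuous_on copula_lipschitz[OF C(2) unit(3)] unfolding unit_int_def by blast
  moreover have "C v 0 \<le> v - e" "v - e \<le> C v 1"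
    using tnorm_zero[OF C(1) unit(3)] copula_one[OF C(2) unit(3)] assms by auto
  ultimately obtain w where w: "w \<in> unit_int" "C v w = v - e"
    using IVT'[of "C v" 0 "v - e" 1] by (auto simp: unit_int_def)
  have "C (u + e) 1 - C (u + e) w \<le> C v 1 - C v w"
    using assms w by (intro copula_2_increasing[OF C(2)]) (auto simp: unit_int_def)
  then have "u \<le> C (u + e) w"
    using copula_one[OF C(2)] unit w by simp
  then have "C u v \<le> C (C (u + e) w) v"
    using copula_mono[OF C(2)] uninorm_closed[OF tnorm_uninorm[OF C(1)]] unit w by blast
  also have "\<dots> = C (u + e) (C w v)"
    using uninorm_assoc[OF tnorm_uninorm[OF C(1)]] unit w by blast
  also have "\<dots> = C (u + e) (v - e)"
    using uninorm_commute[OF tnorm_uninorm[OF C(1)]] unit w by metis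
  finally show ?thesis .
qed

lemma tnorm_copula_majorization:
  assumes C: "tnorm C" "copula C"
    and unit: "a \<in> unit_int" "b \<in> unit_int" "c \<in> unit_int" "d \<in> unit_int"
    and "a \<le> b" "a \<le> c" "b \<le> d" "c \<le> d" "a + d \<le> b + c"
  shows "C a d \<le> C b c"
proof -
  have balanced: "C a d \<le> C p q"
    if "p \<in> unit_int" "q \<in> unit_int" "a \<le> p" "p \<le> q" "q \<le> d" "a + d \<le> p + q" for p q
  proof -
    (* Raise d to v, then move v - q from the second argument to the first. *)
    define v where "v = min 1 (p + q - a)"
    have v: "v \<in> unit_int" "d \<le> v" "a + (v - q) \<in> unit_int" "a + (v - q) \<le> p"
      using that unit by (auto simp: v_def unit_int_def)
    have "C a d \<le> C a v"
      using copula_mono[OF C(2)] unit v by blast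
    also have "\<dots> \<le> C (a + (v - q)) (v - (v - q))"
      using that unit v by (intro tnorm_copula_transfer[OF C]) (auto simp: unit_int_def)
    also have "\<dots> \<le> C p q"
      using copula_mono[OF C(2)] that v by simp
    finally show ?thesis .
  qed
  show ?thesis
  proof (cases "b \<le> c")
    case True
    with assms show ?thesis
      by (intro balanced) auto
  next
    case False
    with assms have "C a d \<le> C c b"
      by (intro balanced) auto
    then show ?thesis
      using uninorm_commute[OF tnorm_uninorm[OF C(1)] unit(2,3)] by simp
  qed
qed

lemma tnorm_Phi:
  assumes "tconorm s"
  shows "tnorm (Phi s)"
proof -
  have s: "uninorm s" and zero: "\<And>x. x \<in> unit_int \<Longrightarrow> s 0 x = x \<and> s x 0 = x"
    using assms by (simp_all add: tconorm_def)
  have neg: "1 - x \<in> unit_int" if "x \<in> unit_int" for x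
    using that by (auto simp: unit_int_def)
  show ?thesis
    unfolding tnorm_def uninorm_def Phi_def
  proof (intro conjI ballI impI bexI[of _ 1])
    show "1 - s (1 - x) (1 - y) \<in> unit_int" if "x \<in> unit_int" "y \<in> unit_int" for x y
      using that neg uninorm_closed[OF s] by blast
    show "1 - s (1 - x) (1 - y) = 1 - s (1 - y) (1 - x)" if "x \<in> unit_int" "y \<in> unit_int" for x y
      using that neg uninorm_commute[OF s] by metis
    show "1 - s (1 - (1 - s (1 - x) (1 - y))) (1 - z) = 1 - s (1 - x) (1 - (1 - s (1 - y) (1 - z)))"
      if "x \<in> unit_int" "y \<in> unit_int" "z \<in> unit_int" for x y z
      using that neg uninorm_assoc[OF s] by simp
    show "1 - s (1 - x) (1 - z) \<le> 1 - s (1 - y) (1 - z)"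
      if "x \<in> unit_int" "y \<in> unit_int" "z \<in> unit_int" "x \<le> y" for x y z
      using that neg uninorm_mono_left[OF s, of "1 - y" "1 - x" "1 - z"] by simp
  qed (use zero neg in \<open>auto simp: unit_int_def\<close>)
qed

lemma tconorm_copula_majorization:
  assumes S: "tconorm S" "copula (Phi S)"
    and unit: "a \<in> unit_int" "b \<in> unit_int" "c \<in> unit_int" "d \<in> unit_int"
    and "a \<le> b" "a \<le> c" "b \<le> d" "c \<le> d" "b + c \<le> a + d"
  shows "S b c \<le> S a d"
proof -
  have "Phi S (1 - d) (1 - a) \<le> Phi S (1 - b) (1 - c)"
    using assms by (intro tnorm_copula_majorization[OF tnorm_Phi[OF S(1)] S(2)]) (auto simp: unit_int_def)
  then show ?thesis
    using uninorm_commute[OF tconorm_uninorm[OF S(1)] unit(1,4)] by (simp add: Phi_def)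
qed

lemma rearrangement_two:
  assumes "tnorm t" "tconorm s" "copula t" "copula (Phi s)"
    and unit: "x1 \<in> unit_int" "x2 \<in> unit_int" "y1 \<in> unit_int" "y2 \<in> unit_int"
    and "x1 \<le> x2" "y1 \<le> y2"
  shows "s (t x2 y1) (t x1 y2) \<le> s (t x1 y1) (t x2 y2)"
proof (rule tconorm_copula_majorization[OF assms(2,4)])
  show "t x1 y1 \<in> unit_int" "t x2 y1 \<in> unit_int" "t x1 y2 \<in> unit_int" "t x2 y2 \<in> unit_int"
    using unit uninorm_closed[OF tnorm_uninorm[OF assms(1)]] by blast+
  show "t x1 y1 \<le> t x2 y1" "t x1 y1 \<le> t x1 y2" "t x2 y1 \<le> t x2 y2" "t x1 y2 \<le> t x2 y2"
    using assms uninorm_mono[OF tnorm_uninorm[OF assms(1)]] by auto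
  have "t x1 y2 - t x1 y1 \<le> t x2 y2 - t x2 y1"
    using assms by (intro copula_2_increasing) (auto simp: unit_int_def)
  then show "t x2 y1 + t x1 y2 \<le> t x1 y1 + t x2 y2"
    by simp
qed

lemma dual_rearrangement_two:
  assumes "tnorm t" "tconorm s" "copula t" "copula (Phi s)"
    and unit: "x1 \<in> unit_int" "x2 \<in> unit_int" "y1 \<in> unit_int" "y2 \<in> unit_int"
    and "x1 \<le> x2" "y1 \<le> y2"
  shows "t (s x1 y1) (s x2 y2) \<le> t (s x2 y1) (s x1 y2)"
proof (rule tnorm_copula_majorization[OF assms(1,3)])
  show "s x1 y1 \<in> unit_int" "s x2 y1 \<in> unit_int" "s x1 y2 \<in> unit_int" "s x2 y2 \<in> unit_int"
    using unit uninorm_closed[OF tconorm_uninorm[OF assms(2)]] by blast+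
  show "s x1 y1 \<le> s x2 y1" "s x1 y1 \<le> s x1 y2" "s x2 y1 \<le> s x2 y2" "s x1 y2 \<le> s x2 y2"
    using assms uninorm_mono[OF tconorm_uninorm[OF assms(2)]] by auto
  have "Phi s (1 - x2) (1 - y1) - Phi s (1 - x2) (1 - y2) \<le> Phi s (1 - x1) (1 - y1) - Phi s (1 - x1) (1 - y2)"
    using assms by (intro copula_2_increasing) (auto simp: unit_int_def)
  then show "s x1 y1 + s x2 y2 \<le> s x2 y1 + s x1 y2"
    by (simp add: Phi_def)
qed

theorem theorem9:
  fixes t s :: "real \<Rightarrow> real \<Rightarrow> real"
  assumes "tnorm t" and "tconorm s"
    and "copula t" and "archimedean t"
    and "copula (Phi s)" and "archimedean (Phi s)"
  shows "rearrangement_ineq t s \<and> dual_rearrangement_ineq t s"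
proof
  have t: "uninorm t" "\<And>x y. x \<in> unit_int \<Longrightarrow> y \<in> unit_int \<Longrightarrow> t x y \<in> unit_int"
    and s: "uninorm s" "\<And>x y. x \<in> unit_int \<Longrightarrow> y \<in> unit_int \<Longrightarrow> s x y \<in> unit_int"
    using assms(1,2) uninorm_closed by (auto dest: tnorm_uninorm tconorm_uninorm)
  have identities: "0 \<in> unit_int" "\<And>x. x \<in> unit_int \<Longrightarrow> s x 0 = x"
    "1 \<in> unit_int" "\<And>x. x \<in> unit_int \<Longrightarrow> t x 1 = x"
    using assms(1,2) by (simp_all add: unit_int_def tnorm_def tconorm_def)
  show "rearrangement_ineq t s"
    unfolding rearrangement_ineq_def
    by (intro allI impI bigop_rearrangement[where R = "(\<le>)", OF s(1) identities(1,2) t(2)])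
      (simp_all add: rearrangement_two[OF assms(1,2,3,5)])
  show "dual_rearrangement_ineq t s"
    unfolding dual_rearrangement_ineq_def
    by (intro allI impI bigop_rearrangement[where R = "(\<ge>)", OF t(1) identities(3,4) s(2)])
      (simp_all add: dual_rearrangement_two[OF assms(1,2,3,5)])
qed

end
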